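(* Let $p$ be a well-typed Molholes program with exactly one input resource $r_{in}=\mathsf{Ref}\,I\,0$, one internal resource $r=\mathsf{Ref}\,S\,1$ with initial value $v:S$, and one output resource $r_{out}=\mathsf{Ref}\,O\,2$, whose body is \[\mathsf{program}\,p=\mathsf{Comp}\,(\mathsf{Get}\,r_{in})\,(\mathsf{Comp}\,(\mathsf{Get}\,r)\,(\mathsf{Comp}\,(\mathsf{Arr}\,f)\,(\mathsf{Comp}\,(\mathsf{Set}\,r)\,(\mathsf{Set}\,r_{out}))))\] for some $f:((\mathsf{Unit}\times I)\times S)\to((\mathsf{Unit}\times O)\times S)$. Let $f':I\times S\to O\times S$ be $f'(a,s)=(b,s')$ where $((tt,b),s')=f((tt,a),s)$, and let $\mathit{translate}\,p=\mathsf{Loop}\,v\,(\mathsf{Arr}\,f')$ (a YampaCore term of type $\mathsf{SF}\,I\,O$). Then for every stream $a_0,a_1,a_2,\dots$ of elements of $I$, the Molholes stream $\mathrm{run}\,p\,(\mathrm{init}\,p)\,([a_0],[a_1],\dots)$ is bisimilar (i.e. equal, as an infinite stream) to $([b_0],[b_1],\dots)$ where $b_0,b_1,\dots=\mathrm{run}_Y\,(\mathrm{step}_Y(\mathit{translate}\,p))\,(a_0,a_1,\dots)$.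
   Context: Host language: types are sets, functions total; products, $\mathsf{Unit}=\{tt\}$. Streams are infinite sequences. YampaCore: $\mathsf{sf}\,A\,B$ is the final-coalgebra type $\mathsf{sf}\,A\,B\cong A\to B\times\mathsf{sf}\,A\,B$. Terms: $\mathsf{Arr}\,g:\mathsf{SF}\,A\,B$ ($g:A\to B$), $\mathsf{Comp}$, $\mathsf{First}$, and $\mathsf{Loop}\,c\,t:\mathsf{SF}\,A\,B$ for $c:C$, $t:\mathsf{SF}(A\times C)(B\times C)$. Semantics: $\mathrm{step}_Y(\mathsf{Arr}\,g)=\mathit{arr}\,g$ with $\mathit{arr}\,g=\lambda x.(g\,x,\mathit{arr}\,g)$; $\mathrm{step}_Y(\mathsf{Loop}\,c\,t)=\mathit{loop}\,c\,(\mathrm{step}_Y t)$ with $\mathit{loop}\,c\,s=\lambda x.(y,\mathit{loop}\,c'\,s')$ where $((y,c'),s')=s(x,c)$ (Comp, First are as usual and not needed here). $\mathrm{run}_Y\,s\,(a:as)=b:\mathrm{run}_Y\,s'\,as$ where $(b,s')=s\,a$. Molholes: a resource of type $A$ is $\mathsf{Ref}\,A\,n$, $\mathrm{id}=n$. Terms $\mathsf{Arr}\,g$, $\mathsf{Comp}\,t_1\,t_2$, $\mathsf{First}\,t$, $\mathsf{Get}\,r:\mathsf{RSF}\,A\,(A\times B)$, $\mathsf{Set}\,r:\mathsf{RSF}\,(A\times B)\,A$ ($r$ of type $B$). A status is $\mathsf{Internal}$, $\mathsf{Input}\,b$ or $\mathsf{Output}\,b$; a cell is $\mathsf{Cell}(s,\tau)\,x$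 with $x$ a value of $\tau$ or $\mathsf{undef}$; a memory is a partial map $\mathbb N\rightharpoonup$ cells. For $r=\mathsf{Ref}\,A\,n$: $\mathrm{read}\,r\,\sigma=(x,\sigma)$ if $\sigma n=\mathsf{Cell}(\mathsf{Internal},A)x$; $=(x,\sigma[n\mapsto\mathsf{Cell}(\mathsf{Input}\,\mathrm{false},A)\,\mathsf{undef}])$ if $\sigma n=\mathsf{Cell}(\mathsf{Input}\,\mathrm{true},A)x$; else undefined. $\mathrm{write}\,r\,\sigma\,w=\sigma[n\mapsto\mathsf{Cell}(\mathsf{Internal},A)w]$ if $\sigma n=\mathsf{Cell}(\mathsf{Internal},A)x$; $=\sigma[n\mapsto\mathsf{Cell}(\mathsf{Output}\,\mathrm{false},A)w]$ if $\sigma n=\mathsf{Cell}(\mathsf{Output}\,\mathrm{true},A)\,\mathsf{undef}$; else undefined. Stepwise semantics $\mathrm{step}$ maps $\mathsf{RSF}\,A\,B$ to partial functions $A\to(\text{memory}\rightharpoonup B\times\text{memory})$: $\mathsf{Arr}\,g\mapsto\lambda x\sigma.(g x,\sigma)$; $\mathsf{Comp}\,t_1t_2\mapsto$ sequential composition threading memory; $\mathsf{First}\,t\mapsto\lambda(x,c)\sigma.((y,c),\sigma')$ with $(y,\sigma')=\mathrm{step}\,t\,x\,\sigma$; $\mathsf{Get}\,r\mapsto\lambda x\sigma.((x,y),\sigma')$ with $(y,\sigma')=\mathrm{read}\,r\,\sigma$; $\mathsf{Set}\,r\mapsto\lambda(x,y)\sigma.(x,\mathrm{write}\,r\,\sigma\,y)$.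 A program $p$ has a list $\mathsf{inputs}\,p$ of $k_{in}$ types, a list $\mathsf{internals}\,p$ of $k$ typed values, a list $\mathsf{outputs}\,p$ of $k_{out}$ types and a body $\mathsf{program}\,p:\mathsf{RSF}\,\mathsf{Unit}\,\mathsf{Unit}$; input resources have identifiers $0..k_{in}-1$, internal ones $k_{in}..k_{in}+k-1$, output ones $k_{in}+k..k_{in}+k+k_{out}-1$. $\mathrm{init}\,p$ maps each internal index $n$ to $\mathsf{Cell}(\mathsf{Internal},\tau)\,w$ where $w:\tau$ is the corresponding initial value, and is undefined elsewhere. $\mathrm{pull}\,p\,\sigma\,i$ (for a list $i$ of input values) maps input index $n$ to $\mathsf{Cell}(\mathsf{Input}\,\mathrm{true},\tau_n)\,i_n$, output index $n$ to $\mathsf{Cell}(\mathsf{Output}\,\mathrm{true},\tau)\,\mathsf{undef}$, and otherwise agrees with $\sigma$. $\mathrm{push}\,p\,\sigma$ is the list, in index order, of the values $w$ with $\sigma\,n=\mathsf{Cell}(\mathsf{Output}\,\mathrm{false},\tau)\,w$ for output indices $n$. $\mathrm{run}\,p\,\sigma\,(i:is)=(\mathrm{push}\,p\,\sigma'):\mathrm{run}\,p\,\sigma'\,is$ where $(tt,\sigma')=\mathrm{step}(\mathsf{program}\,p)\,tt\,(\mathrm{pull}\,p\,\sigma\,i)$. Well-typedness: an abstract memory $\Sigma$ maps indices to (status, type). $\mathrm{read}^\dagger\,(\mathsf{Ref}\,A\,n)\,\Sigma=\Sigma$ if $\Sigma n=(\mathsf{Internal},A)$, $=\Sigma[n\mapsto(\mathsf{Input}\,\mathrm{false},A)]$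 if $\Sigma n=(\mathsf{Input}\,\mathrm{true},A)$, undefined otherwise; $\mathrm{write}^\dagger$ is analogous with $\mathsf{Output}\,\mathrm{true}\mapsto\mathsf{Output}\,\mathrm{false}$. $\mathrm{step}^\dagger(\mathsf{Arr}\,g)\Sigma=\Sigma$, $\mathrm{step}^\dagger(\mathsf{First}\,t)=\mathrm{step}^\dagger t$, $\mathrm{step}^\dagger(\mathsf{Comp}\,t_1t_2)\Sigma=\mathrm{step}^\dagger t_2(\mathrm{step}^\dagger t_1\Sigma)$, $\mathrm{step}^\dagger(\mathsf{Get}\,r)=\mathrm{read}^\dagger r$, $\mathrm{step}^\dagger(\mathsf{Set}\,r)=\mathrm{write}^\dagger r$. $\mathrm{init}^\dagger p$ gives input indices $(\mathsf{Input}\,\mathrm{true},\tau)$, output indices $(\mathsf{Output}\,\mathrm{true},\tau)$, internal indices $(\mathsf{Internal},\tau)$. $p$ is well-typed if $\mathrm{step}^\dagger(\mathsf{program}\,p)(\mathrm{init}^\dagger p)$ is defined and in it every input index has status $\mathsf{Input}\,\mathrm{false}$ and every output index has status $\mathsf{Output}\,\mathrm{false}$. *)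

theory Defs
  imports Main "HOL-Library.Stream"
begin

text \<open>Memory cells hold values of a universe 'u, tagged with a type code 't.
  None represents undef.\<close>

datatype status = Internal | Input bool | Output bool

datatype ('u, 't) cell = Cell status 't "'u option"

type_synonym ('u, 't) memory = "nat \<Rightarrow> ('u, 't) cell option"
type_synonym 't absmemory = "nat \<Rightarrow> (status \<times> 't) option"

text \<open>A resource of (HOL) type 'b: type code, identifier, and the coercions
  between 'b and the universe determined by that type code.\<close>
datatype ('b, 'u, 't) resource = Ref (rty: 't) (rid: nat) (rinj: "'b \<Rightarrow> 'u") (rprj: "'u \<Rightarrow> 'b")

definition mread :: "('b, 'u, 't) resource \<Rightarrow> ('u, 't) memory \<Rightarrow> ('b \<times> ('u, 't) memory) option" where
  "mread r \<sigma> = (case \<sigma> (rid r) of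
      Some (Cell Internal A (Some x)) \<Rightarrow>
        if A = rty r then Some (rprj r x, \<sigma>) else None
    | Some (Cell (Input True) A (Some x)) \<Rightarrow>
        if A = rty r then Some (rprj r x, \<sigma>(rid r \<mapsto> Cell (Input False) A None)) else None
    | _ \<Rightarrow> None)"

definition mwrite :: "('b, 'u, 't) resource \<Rightarrow> ('u, 't) memory \<Rightarrow> 'b \<Rightarrow> ('u, 't) memory option" where
  "mwrite r \<sigma> w = (case \<sigma> (rid r) of
      Some (Cell Internal A _) \<Rightarrow>
        if A = rty r then Some (\<sigma>(rid r \<mapsto> Cell Internal A (Some (rinj r w)))) else None
    | Some (Cell (Output True) A None) \<Rightarrow>
        if A = rty r then Some (\<sigma>(rid r \<mapsto> Cell (Output False) A (Some (rinj r w)))) else None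
    | _ \<Rightarrow> None)"

definition read_abs :: "('b, 'u, 't) resource \<Rightarrow> 't absmemory \<Rightarrow> 't absmemory option" where
  "read_abs r \<Sigma> = (case \<Sigma> (rid r) of
      Some (Internal, A) \<Rightarrow> if A = rty r then Some \<Sigma> else None
    | Some (Input True, A) \<Rightarrow> if A = rty r then Some (\<Sigma>(rid r \<mapsto> (Input False, A))) else None
    | _ \<Rightarrow> None)"

definition write_abs :: "('b, 'u, 't) resource \<Rightarrow> 't absmemory \<Rightarrow> 't absmemory option" where
  "write_abs r \<Sigma> = (case \<Sigma> (rid r) of
      Some (Internal, A) \<Rightarrow> if A = rty r then Some \<Sigma> else None
    | Some (Output True, A) \<Rightarrow> if A = rty r then Some (\<Sigma>(rid r \<mapsto> (Output False, A))) else None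
    | _ \<Rightarrow> None)"

text \<open>RSF terms, shallowly embedded as the pair (step, abstract step).\<close>
datatype ('a, 'b, 'u, 't) RSF =
  RSF (step: "'a \<Rightarrow> ('u, 't) memory \<Rightarrow> ('b \<times> ('u, 't) memory) option")
      (step_abs: "'t absmemory \<Rightarrow> 't absmemory option")

definition Arr :: "('a \<Rightarrow> 'b) \<Rightarrow> ('a, 'b, 'u, 't) RSF" where
  "Arr g = RSF (\<lambda>x \<sigma>. Some (g x, \<sigma>)) Some"

definition Comp :: "('a, 'b, 'u, 't) RSF \<Rightarrow> ('b, 'c, 'u, 't) RSF \<Rightarrow> ('a, 'c, 'u, 't) RSF" where
  "Comp t1 t2 = RSF
     (\<lambda>x \<sigma>. case step t1 x \<sigma> of None \<Rightarrow> None | Some (y, \<sigma>') \<Rightarrow> step t2 y \<sigma>')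
     (\<lambda>\<Sigma>. case step_abs t1 \<Sigma> of None \<Rightarrow> None | Some \<Sigma>' \<Rightarrow> step_abs t2 \<Sigma>')"

definition First :: "('a, 'b, 'u, 't) RSF \<Rightarrow> ('a \<times> 'c, 'b \<times> 'c, 'u, 't) RSF" where
  "First t = RSF
     (\<lambda>(x, c) \<sigma>. case step t x \<sigma> of None \<Rightarrow> None | Some (y, \<sigma>') \<Rightarrow> Some ((y, c), \<sigma>'))
     (step_abs t)"

definition Get :: "('b, 'u, 't) resource \<Rightarrow> ('a, 'a \<times> 'b, 'u, 't) RSF" where
  "Get r = RSF
     (\<lambda>x \<sigma>. case mread r \<sigma> of None \<Rightarrow> None | Some (y, \<sigma>') \<Rightarrow> Some ((x, y), \<sigma>'))
     (read_abs r)"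

definition Set :: "('b, 'u, 't) resource \<Rightarrow> ('a \<times> 'b, 'a, 'u, 't) RSF" where
  "Set r = RSF
     (\<lambda>(x, y) \<sigma>. case mwrite r \<sigma> y of None \<Rightarrow> None | Some \<sigma>' \<Rightarrow> Some (x, \<sigma>'))
     (write_abs r)"

text \<open>Programs: input types, internal (type, initial value) pairs, output types, body.\<close>
datatype ('u, 't) prog = Prog
  (inputs: "'t list") (internals: "('t \<times> 'u) list") (outputs: "'t list")
  (program: "(unit, unit, 'u, 't) RSF")

definition kin :: "('u, 't) prog \<Rightarrow> nat" where "kin p = length (inputs p)"
definition kint :: "('u, 't) prog \<Rightarrow> nat" where "kint p = length (internals p)"
definition kout :: "('u, 't) prog \<Rightarrow> nat" where "kout p = length (outputs p)"

definition init :: "('u, 't) prog \<Rightarrow> ('u, 't) memory" where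
  "init p = (\<lambda>n. if kin p \<le> n \<and> n < kin p + kint p
      then Some (Cell Internal (fst (internals p ! (n - kin p))) (Some (snd (internals p ! (n - kin p)))))
      else None)"

definition pull :: "('u, 't) prog \<Rightarrow> ('u, 't) memory \<Rightarrow> 'u list \<Rightarrow> ('u, 't) memory" where
  "pull p \<sigma> i = (\<lambda>n.
      if n < kin p then Some (Cell (Input True) (inputs p ! n) (Some (i ! n)))
      else if kin p + kint p \<le> n \<and> n < kin p + kint p + kout p
        then Some (Cell (Output True) (outputs p ! (n - kin p - kint p)) None)
      else \<sigma> n)"

fun out_val :: "('u, 't) cell option \<Rightarrow> 'u list" where
  "out_val (Some (Cell (Output False) _ (Some w))) = [w]"
| "out_val _ = []"

definition push :: "('u, 't) prog \<Rightarrow> ('u, 't) memory \<Rightarrow> 'u list" where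
  "push p \<sigma> = concat (map (\<lambda>n. out_val (\<sigma> n)) [kin p + kint p ..< kin p + kint p + kout p])"

text \<open>One step of the program; the step is defined for well-typed programs,
  otherwise an unspecified memory results.\<close>
definition next_mem :: "('u, 't) prog \<Rightarrow> ('u, 't) memory \<Rightarrow> 'u list \<Rightarrow> ('u, 't) memory" where
  "next_mem p \<sigma> i = snd (the (step (program p) () (pull p \<sigma> i)))"

primcorec run :: "('u, 't) prog \<Rightarrow> ('u, 't) memory \<Rightarrow> 'u list stream \<Rightarrow> 'u list stream" where
  "shd (run p \<sigma> is) = push p (next_mem p \<sigma> (shd is))"
| "stl (run p \<sigma> is) = run p (next_mem p \<sigma> (shd is)) (stl is)"

definition init_abs :: "('u, 't) prog \<Rightarrow> 't absmemory" where
  "init_abs p = (\<lambda>n.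
      if n < kin p then Some (Input True, inputs p ! n)
      else if n < kin p + kint p then Some (Internal, fst (internals p ! (n - kin p)))
      else if n < kin p + kint p + kout p then Some (Output True, outputs p ! (n - kin p - kint p))
      else None)"

definition well_typed :: "('u, 't) prog \<Rightarrow> bool" where
  "well_typed p = (case step_abs (program p) (init_abs p) of
      None \<Rightarrow> False
    | Some \<Sigma> \<Rightarrow>
        (\<forall>n < kin p. \<exists>\<tau>. \<Sigma> n = Some (Input False, \<tau>)) \<and>
        (\<forall>n. kin p + kint p \<le> n \<and> n < kin p + kint p + kout p \<longrightarrow>
              (\<exists>\<tau>. \<Sigma> n = Some (Output False, \<tau>))))"

codatatype ('a, 'b) sf = SF (sfun: "'a \<Rightarrow> 'b \<times> ('a, 'b) sf")

primcorec arr :: "('a \<Rightarrow> 'b) \<Rightarrow> ('a, 'b) sf" where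
  "sfun (arr g) = (\<lambda>x. (g x, arr g))"

primcorec loop :: "'c \<Rightarrow> ('a \<times> 'c, 'b \<times> 'c) sf \<Rightarrow> ('a, 'b) sf" where
  "sfun (loop c s) = (\<lambda>x. case sfun s (x, c) of ((y, c'), s') \<Rightarrow> (y, loop c' s'))"

primcorec runY :: "('a, 'b) sf \<Rightarrow> 'a stream \<Rightarrow> 'b stream" where
  "runY s as = fst (sfun s (shd as)) ## runY (snd (sfun s (shd as))) (stl as)"

text \<open>step_Y of the YampaCore terms Arr g and Loop c t (shallow embedding).\<close>
definition stepY_Arr :: "('a \<Rightarrow> 'b) \<Rightarrow> ('a, 'b) sf" where "stepY_Arr g = arr g"
definition stepY_Loop :: "'c \<Rightarrow> ('a \<times> 'c, 'b \<times> 'c) sf \<Rightarrow> ('a, 'b) sf" where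
  "stepY_Loop c s = loop c s"

text \<open>f' from f, and step_Y (translate p) = step_Y (Loop v (Arr f')).\<close>
definition fprime :: "((unit \<times> 'i) \<times> 's \<Rightarrow> (unit \<times> 'o) \<times> 's) \<Rightarrow> 'i \<times> 's \<Rightarrow> 'o \<times> 's" where
  "fprime f = (\<lambda>(a, s). case f (((), a), s) of ((_, b), s') \<Rightarrow> (b, s'))"

definition stepY_translate :: "((unit \<times> 'i) \<times> 's \<Rightarrow> (unit \<times> 'o) \<times> 's) \<Rightarrow> 's \<Rightarrow> ('i, 'o) sf" where
  "stepY_translate f v = stepY_Loop v (stepY_Arr (fprime f))"

datatype ('i, 's, 'o) uval = UI 'i | US 's | UO 'o
datatype ty = TI | TS | TO

fun prjI :: "('i, 's, 'o) uval \<Rightarrow> 'i" where "prjI (UI x) = x" | "prjI _ = undefined"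
fun prjS :: "('i, 's, 'o) uval \<Rightarrow> 's" where "prjS (US x) = x" | "prjS _ = undefined"
fun prjO :: "('i, 's, 'o) uval \<Rightarrow> 'o" where "prjO (UO x) = x" | "prjO _ = undefined"

definition refI :: "nat \<Rightarrow> ('i, ('i, 's, 'o) uval, ty) resource" where "refI n = Ref TI n UI prjI"
definition refS :: "nat \<Rightarrow> ('s, ('i, 's, 'o) uval, ty) resource" where "refS n = Ref TS n US prjS"
definition refO :: "nat \<Rightarrow> ('o, ('i, 's, 'o) uval, ty) resource" where "refO n = Ref TO n UO prjO"

end

theory Submission
  imports Defs
begin

text \<open>In every step the body reads the input \<open>a\<close> and the state \<open>s\<close> held in cell 1, and writes
  \<open>s'\<close> back to cell 1 and \<open>b\<close> to the output cell, where \<open>(b, s') = f' (a, s)\<close>. This is exactly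
  one step of \<open>loop s (arr f')\<close>, so the two output streams agree by coinduction, with the
  content of cell 1 as the state of the loop.\<close>

lemma step_Arr [simp]: "step (Arr g) x \<sigma> = Some (g x, \<sigma>)"
  by (simp add: Arr_def)

lemma step_Comp [simp]:
  "step (Comp t1 t2) x \<sigma> = (case step t1 x \<sigma> of None \<Rightarrow> None | Some (y, \<sigma>') \<Rightarrow> step t2 y \<sigma>')"
  by (simp add: Comp_def)

lemma step_Get [simp]:
  "step (Get r) x \<sigma> = (case mread r \<sigma> of None \<Rightarrow> None | Some (y, \<sigma>') \<Rightarrow> Some ((x, y), \<sigma>'))"
  by (simp add: Get_def)

lemma step_Set [simp]:
  "step (Set r) (x, y) \<sigma> = (case mwrite r \<sigma> y of None \<Rightarrow> None | Some \<sigma>' \<Rightarrow> Some (x, \<sigma>'))"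
  by (simp add: Set_def)

lemma runY_loop_arr:
  "runY (loop s (arr g)) (a ## as) = fst (g (a, s)) ## runY (loop (snd (g (a, s))) (arr g)) as"
  by (subst runY.code) (simp split: prod.split)

locale state_machine_prog =
  fixes p :: "(('i, 's, 'o) uval, ty) prog"
    and v :: 's
    and f :: "(unit \<times> 'i) \<times> 's \<Rightarrow> (unit \<times> 'o) \<times> 's"
  assumes inputs_eq: "inputs p = [TI]"
    and internals_eq: "internals p = [(TS, US v)]"
    and outputs_eq: "outputs p = [TO]"
    and program_eq: "program p =
      Comp (Get (refI 0))
        (Comp (Get (refS 1))
          (Comp (Arr f)
            (Comp (Set (refS 1)) (Set (refO 2)))))"
begin

lemma resource_counts: "kin p = 1" "kint p = 1" "kout p = 1"
  using inputs_eq internals_eq outputs_eq by (simp_all add: kin_def kint_def kout_def)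

lemma init_state_cell: "init p 1 = Some (Cell Internal TS (Some (US v)))"
  using internals_eq by (simp add: init_def resource_counts)

lemma pull_eq:
  "pull p \<sigma> [UI a] = \<sigma>(0 \<mapsto> Cell (Input True) TI (Some (UI a)), 2 \<mapsto> Cell (Output True) TO None)"
  by (rule ext) (simp add: pull_def resource_counts inputs_eq outputs_eq)

lemma next_mem_eq:
  assumes "\<sigma> 1 = Some (Cell Internal TS (Some (US s)))"
  shows "next_mem p \<sigma> [UI a] = \<sigma>(0 \<mapsto> Cell (Input False) TI None,
      1 \<mapsto> Cell Internal TS (Some (US (snd (fprime f (a, s))))),
      2 \<mapsto> Cell (Output False) TO (Some (UO (fst (fprime f (a, s))))))"
  using assms
  by (simp add: next_mem_def program_eq pull_eq mread_def mwrite_def refI_def refS_def refO_def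
      fprime_def fun_upd_twist split: prod.split)

lemma push_output_cell: "push p (\<tau>(2 \<mapsto> Cell (Output False) TO (Some (UO b)))) = [UO b]"
  by (simp add: push_def resource_counts)

lemma run_eq_runY_loop:
  assumes "\<sigma> 1 = Some (Cell Internal TS (Some (US s)))"
  shows "run p \<sigma> (smap (\<lambda>a. [UI a]) as) = smap (\<lambda>b. [UO b]) (runY (loop s (arr (fprime f))) as)"
  using assms
proof (coinduction arbitrary: \<sigma> s as rule: stream.coinduct)
  case (Eq_stream \<sigma> s as)
  obtain a as' where as: "as = a ## as'"
    by (cases as)
  let ?\<sigma>' = "next_mem p \<sigma> [UI a]"
  have next_mem: "?\<sigma>' = \<sigma>(0 \<mapsto> Cell (Input False) TI None,
      1 \<mapsto> Cell Internal TS (Some (US (snd (fprime f (a, s))))),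
      2 \<mapsto> Cell (Output False) TO (Some (UO (fst (fprime f (a, s))))))"
    using Eq_stream by (rule next_mem_eq)
  have "shd (run p \<sigma> (smap (\<lambda>a. [UI a]) as)) = [UO (fst (fprime f (a, s)))]"
    by (simp add: as next_mem push_output_cell)
  moreover have "stl (run p \<sigma> (smap (\<lambda>a. [UI a]) as)) = run p ?\<sigma>' (smap (\<lambda>a. [UI a]) as')"
    by (simp add: as)
  moreover have "?\<sigma>' 1 = Some (Cell Internal TS (Some (US (snd (fprime f (a, s))))))"
    by (simp add: next_mem)
  ultimately show ?case
    by (auto simp: as runY_loop_arr)
qed

end

theorem corollary2:
  fixes p :: "(('i, 's, 'o) uval, ty) prog"
    and v :: 's
    and f :: "(unit \<times> 'i) \<times> 's \<Rightarrow> (unit \<times> 'o) \<times> 's"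
    and as :: "'i stream"
  assumes wt: "well_typed p"
    and inp: "inputs p = [TI]"
    and intl: "internals p = [(TS, US v)]"
    and outp: "outputs p = [TO]"
    and body: "program p =
      Comp (Get (refI 0))
        (Comp (Get (refS 1))
          (Comp (Arr f)
            (Comp (Set (refS 1)) (Set (refO 2)))))"
  shows "run p (init p) (smap (\<lambda>a. [UI a]) as)
       = smap (\<lambda>b. [UO b]) (runY (stepY_translate f v) as)"
proof -
  interpret state_machine_prog p v f
    using inp intl outp body by unfold_locales
  show ?thesis
    unfolding stepY_translate_def stepY_Loop_def stepY_Arr_def
    using init_state_cell by (rule run_eq_runY_loop)
qed

end
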